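(* Let $-1$ denote the automorphism of $\mathcal A_\theta^{alg}$ with $U_1\mapsto U_1^{-1}$, $U_2\mapsto U_2^{-1}$, and let $H^0(\mathcal A_\theta^{alg},{}_{-1}\mathcal A_\theta^{alg\ast})$ be the space of formal series $\varphi=\sum\varphi_{n,m}U_1^nU_2^m$ with $((-1)\cdot a)\varphi=\varphi a$ for all $a\in\mathcal A_\theta^{alg}$. Let $\mathbb Z_4$ be generated by the automorphism $\rho$ with $\rho\cdot U_1=U_2^{-1}$, $\rho\cdot U_2=U_1$ (so $\rho^2=-1$), acting on this space termwise. Then $H^0(\mathcal A_\theta^{alg},{}_{-1}\mathcal A_\theta^{alg\ast})^{\mathbb Z_4}\cong\mathbb C^3$.
   Context: Let $\theta\in\mathbb R\setminus\mathbb Q$, $\lambda=e^{2\pi i\theta}$. $\mathcal A_\theta^{alg}$ is the complex algebra of finite sums $\sum a_{n,m}U_1^nU_2^m$ with $U_1,U_2$ invertible and $U_2U_1=\lambda U_1U_2$; formal series $\sum_{(n,m)\in\mathbb Z^2}\varphi_{n,m}U_1^nU_2^m$ with arbitrary coefficients form an $\mathcal A_\theta^{alg}$-bimodule via multiplication. Termwise action of an automorphism $h$: $h\cdot\sum\varphi_{n,m}U_1^nU_2^m=\sum\varphi_{n,m}\,h\cdot(U_1^nU_2^m)$. *)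

theory Defs
  imports "HOL-Analysis.Analysis"
begin

(* Elements of A_theta^alg and formal series sum phi_{n,m} U1^n U2^m are both
   represented by their coefficient functions  int \<times> int \<Rightarrow> complex;
   algebra elements are those with finite support. *)

type_synonym coeffs = "int \<times> int \<Rightarrow> complex"

definition lam :: "real \<Rightarrow> int \<Rightarrow> complex" where
  "lam \<theta> k = exp (2 * of_real pi * \<i> * of_real \<theta> * of_int k)"

definition alg :: "coeffs set" where
  "alg = {a. finite {pq. a pq \<noteq> 0}}"

(* U1^p U2^q \<cdot> U1^n U2^m = \<lambda>^(q n) U1^(p+n) U2^(q+m)  (from U2 U1 = \<lambda> U1 U2) *)
definition left_act :: "real \<Rightarrow> coeffs \<Rightarrow> coeffs \<Rightarrow> coeffs" where
  "left_act \<theta> a \<phi> = (\<lambda>(n, m). \<Sum>(p, q)\<in>{pq. a pq \<noteq> 0}.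
      a (p, q) * lam \<theta> (q * (n - p)) * \<phi> (n - p, m - q))"

(* U1^n U2^m \<cdot> U1^p U2^q = \<lambda>^(m p) U1^(n+p) U2^(m+q) *)
definition right_act :: "real \<Rightarrow> coeffs \<Rightarrow> coeffs \<Rightarrow> coeffs" where
  "right_act \<theta> \<phi> a = (\<lambda>(n, m). \<Sum>(p, q)\<in>{pq. a pq \<noteq> 0}.
      \<phi> (n - p, m - q) * lam \<theta> ((m - q) * p) * a (p, q))"

definition neg_aut :: "coeffs \<Rightarrow> coeffs" where
  "neg_aut a = (\<lambda>(n, m). a (- n, - m))"

(* \<rho>: U1 \<mapsto> U2^(-1), U2 \<mapsto> U1, so
   \<rho>(U1^n U2^m) = U2^(-n) U1^m = \<lambda>^(-n m) U1^m U2^(-n); termwise action on series: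
   coefficient at (p,q) comes from (n,m) = (-q,p) with factor \<lambda>^(q p). *)
definition rho_act :: "real \<Rightarrow> coeffs \<Rightarrow> coeffs" where
  "rho_act \<theta> \<phi> = (\<lambda>(p, q). lam \<theta> (q * p) * \<phi> (- q, p))"

definition H0 :: "real \<Rightarrow> coeffs set" where
  "H0 \<theta> = {\<phi>. \<forall>a\<in>alg. left_act \<theta> (neg_aut a) \<phi> = right_act \<theta> \<phi> a}"

definition H0_Z4 :: "real \<Rightarrow> coeffs set" where
  "H0_Z4 \<theta> = {\<phi>\<in>H0 \<theta>. \<forall>k::nat. (rho_act \<theta> ^^ k) \<phi> = \<phi>}"

end

theory Submission imports Defs begin

text \<open>
  With \<open>half_phase \<theta> x y = \<lambda>^(x y/2)\<close>, the relations imposed on \<open>\<phi>\<close> by the monomials \<open>U\<^sub>1\<close> and \<open>U\<^sub>2\<close>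
  say exactly that \<open>\<phi> / half_phase \<theta>\<close> is 2-periodic in both indices, and every such \<open>\<phi>\<close> does satisfy all
  relations. So \<open>H\<^sup>0\<close> is parametrised by the four values of this quotient on the parity classes of
  \<open>\<int>\<^sup>2\<close>, and \<open>\<rho>\<close> acts on these values by swapping the classes \<open>(0,1)\<close> and \<open>(1,0)\<close>.
  The \<open>\<rho>\<close>-invariants are therefore three-dimensional.
\<close>

definition half_phase :: "real \<Rightarrow> int \<Rightarrow> int \<Rightarrow> complex" where
  "half_phase \<theta> x y = exp (of_real pi * \<i> * of_real \<theta> * of_int x * of_int y)"

lemma half_phase_nonzero: "half_phase \<theta> x y \<noteq> 0"
  by (simp add: half_phase_def)

lemma lam_nonzero: "lam \<theta> k \<noteq> 0"
  by (simp add: lam_def)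

lemma lam_0: "lam \<theta> 0 = 1"
  by (simp add: lam_def)

lemma lam_uminus_mult: "lam \<theta> (- k) * lam \<theta> k = 1"
  unfolding lam_def mult_exp_exp by simp

lemma half_phase_shift_left: "half_phase \<theta> (x + 2) y = half_phase \<theta> x y * lam \<theta> y"
  unfolding half_phase_def lam_def mult_exp_exp by (rule arg_cong[where f = exp]) (simp add: algebra_simps)

lemma half_phase_shift_right: "half_phase \<theta> x (y + 2) = half_phase \<theta> x y * lam \<theta> x"
  unfolding half_phase_def lam_def mult_exp_exp by (rule arg_cong[where f = exp]) (simp add: algebra_simps)

lemma half_phase_rho: "lam \<theta> (q * p) * half_phase \<theta> (- q) p = half_phase \<theta> p q"
  unfolding half_phase_def lam_def mult_exp_exp by (rule arg_cong[where f = exp]) (simp add: algebra_simps)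

lemma half_phase_bimodule:
  "lam \<theta> (- q * (n + p)) * half_phase \<theta> (n + p) (m + q)
     = half_phase \<theta> (n - p) (m - q) * lam \<theta> ((m - q) * p)"
  unfolding half_phase_def lam_def mult_exp_exp by (rule arg_cong[where f = exp]) (simp add: algebra_simps)

lemma periodic_eq_mod:
  fixes f :: "int \<Rightarrow> 'a"
  assumes "\<And>x. f (x + d) = f x"
  shows "f x = f (x mod d)"
proof -
  have "f (r + d * k) = f r" for r k
  proof (induction k rule: int_induct[where k = 0])
    case (step1 i)
    then show ?case using assms[of "r + d * i"] by (simp add: algebra_simps)
  next
    case (step2 i)
    then show ?case using assms[of "r + d * (i - 1)"] by (simp add: algebra_simps)
  qed simp
  from this[of "x mod d" "x div d"] show ?thesis by simp
qed

lemma H0_monomial_relation: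
  assumes "\<phi> \<in> H0 \<theta>"
  shows "lam \<theta> (- q * (n + p)) * \<phi> (n + p, m + q) = \<phi> (n - p, m - q) * lam \<theta> ((m - q) * p)"
proof -
  define d where "d = (\<lambda>pq::int \<times> int. if pq = (p, q) then (1::complex) else 0)"
  have supp: "{pq. d pq \<noteq> 0} = {(p, q)}"
    by (auto simp: d_def)
  have neg_supp: "{pq. neg_aut d pq \<noteq> 0} = {(- p, - q)}"
    by (auto simp: neg_aut_def d_def split: if_splits)
  have "d \<in> alg"
    by (simp add: alg_def supp)
  with assms have "left_act \<theta> (neg_aut d) \<phi> (n, m) = right_act \<theta> \<phi> d (n, m)"
    by (auto simp: H0_def)
  then show ?thesis
    unfolding left_act_def right_act_def supp neg_supp by (simp add: neg_aut_def d_def)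
qed

definition parity_series :: "real \<Rightarrow> (int \<times> int \<Rightarrow> complex) \<Rightarrow> coeffs" where
  "parity_series \<theta> g = (\<lambda>(x, y). half_phase \<theta> x y * g (x mod 2, y mod 2))"

lemma parity_series_in_H0: "parity_series \<theta> g \<in> H0 \<theta>"
  unfolding H0_def
proof (intro CollectI ballI)
  fix a :: coeffs
  let ?S = "{pq. a pq \<noteq> 0}"
  let ?neg = "\<lambda>(p::int, q::int). (- p, - q)"
  have neg_supp: "{pq. neg_aut a pq \<noteq> 0} = ?neg ` ?S"
    by (force simp: neg_aut_def image_iff)
  have inj: "inj_on ?neg ?S"
    by (auto simp: inj_on_def)
  have mod2: "(n + p) mod 2 = (n - p) mod 2" for n p :: int
    by presburger
  have summand: "neg_aut a (- p, - q) * lam \<theta> (- q * (n + p)) * parity_series \<theta> g (n + p, m + q)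
      = parity_series \<theta> g (n - p, m - q) * lam \<theta> ((m - q) * p) * a (p, q)" for n m p q
    using half_phase_bimodule[of \<theta> q n p m]
    by (simp add: neg_aut_def parity_series_def mod2 ac_simps)
  show "left_act \<theta> (neg_aut a) (parity_series \<theta> g) = right_act \<theta> (parity_series \<theta> g) a"
  proof (rule ext, clarify)
    fix n m
    have "left_act \<theta> (neg_aut a) (parity_series \<theta> g) (n, m)
        = (\<Sum>(p, q)\<in>?S. neg_aut a (- p, - q) * lam \<theta> (- q * (n + p)) * parity_series \<theta> g (n + p, m + q))"
      unfolding left_act_def neg_supp by (subst sum.reindex[OF inj]) (simp add: case_prod_beta o_def)
    also have "\<dots> = right_act \<theta> (parity_series \<theta> g) a (n, m)"
      unfolding right_act_def prod.case by (rule sum.cong[OF refl]) (clarify, rule summand)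
    finally show "left_act \<theta> (neg_aut a) (parity_series \<theta> g) (n, m) = right_act \<theta> (parity_series \<theta> g) a (n, m)" .
  qed
qed

lemma H0_eq_parity_series:
  assumes "\<phi> \<in> H0 \<theta>"
  shows "\<phi> = parity_series \<theta> (\<lambda>(x, y). \<phi> (x, y) / half_phase \<theta> x y)"
proof -
  define \<psi> where "\<psi> = (\<lambda>x y. \<phi> (x, y) / half_phase \<theta> x y)"
  have shift_left: "\<phi> (x + 2, y) = lam \<theta> y * \<phi> (x, y)" for x y
    using H0_monomial_relation[OF assms, of 0 "x + 1" 1 y] by (simp add: lam_0 mult.commute add.commute)
  have shift_right: "\<phi> (x, y + 2) = lam \<theta> x * \<phi> (x, y)" for x y
  proof -
    have "lam \<theta> (- x) * \<phi> (x, y + 2) = \<phi> (x, y)"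
      using H0_monomial_relation[OF assms, of 1 x 0 "y + 1"] by (simp add: lam_0 add.assoc)
    then show ?thesis
      using lam_uminus_mult[of \<theta> x] by (metis mult.assoc mult.commute mult_1_left)
  qed
  have "\<psi> (x + 2) y = \<psi> x y" for x y
    unfolding \<psi>_def shift_left half_phase_shift_left using lam_nonzero[of \<theta> y] by (simp add: mult.commute)
  moreover have "\<psi> x (y + 2) = \<psi> x y" for x y
    unfolding \<psi>_def shift_right half_phase_shift_right using lam_nonzero[of \<theta> x] by (simp add: mult.commute)
  ultimately have "\<psi> x y = \<psi> (x mod 2) (y mod 2)" for x y
    using periodic_eq_mod[of "\<lambda>x. \<psi> x y" 2 x] periodic_eq_mod[of "\<psi> (x mod 2)" 2 y] by simp
  then show ?thesis
    using half_phase_nonzero[of \<theta>] by (auto simp: parity_series_def \<psi>_def)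
qed

lemma parity_series_eq_iff:
  "parity_series \<theta> g = parity_series \<theta> h \<longleftrightarrow>
     g (0, 0) = h (0, 0) \<and> g (0, 1) = h (0, 1) \<and> g (1, 0) = h (1, 0) \<and> g (1, 1) = h (1, 1)"
proof
  assume eq: "parity_series \<theta> g = parity_series \<theta> h"
  have "g (r, s) = h (r, s)" if "r \<in> {0, 1}" "s \<in> {0, 1}" for r s
  proof -
    have "parity_series \<theta> g (r, s) = parity_series \<theta> h (r, s)"
      using eq by simp
    moreover have "r mod 2 = r" "s mod 2 = s"
      using that by auto
    ultimately show ?thesis
      using half_phase_nonzero[of \<theta> r s] by (simp add: parity_series_def)
  qed
  then show "g (0, 0) = h (0, 0) \<and> g (0, 1) = h (0, 1) \<and> g (1, 0) = h (1, 0) \<and> g (1, 1) = h (1, 1)"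
    by auto
next
  assume "g (0, 0) = h (0, 0) \<and> g (0, 1) = h (0, 1) \<and> g (1, 0) = h (1, 0) \<and> g (1, 1) = h (1, 1)"
  moreover have "x mod 2 = 0 \<or> x mod 2 = 1" for x :: int
    by presburger
  ultimately have "g (x mod 2, y mod 2) = h (x mod 2, y mod 2)" for x y
    by (metis (full_types))
  then show "parity_series \<theta> g = parity_series \<theta> h"
    by (auto simp: parity_series_def)
qed

lemma rho_act_parity_series: "rho_act \<theta> (parity_series \<theta> g) = parity_series \<theta> (\<lambda>(x, y). g (y, x))"
proof (rule ext, clarify)
  fix p q :: int
  have "(- q) mod 2 = q mod 2"
    by presburger
  then show "rho_act \<theta> (parity_series \<theta> g) (p, q) = parity_series \<theta> (\<lambda>(x, y). g (y, x)) (p, q)"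
    using half_phase_rho[of \<theta> q p] by (simp add: rho_act_def parity_series_def mult.assoc[symmetric])
qed

lemma H0_Z4_iff_rho_fixed: "\<phi> \<in> H0_Z4 \<theta> \<longleftrightarrow> \<phi> \<in> H0 \<theta> \<and> rho_act \<theta> \<phi> = \<phi>"
proof -
  have "(rho_act \<theta> ^^ k) \<phi> = \<phi>" if "rho_act \<theta> \<phi> = \<phi>" for k
    using that by (induction k) auto
  moreover have "rho_act \<theta> \<phi> = \<phi>" if "\<forall>k. (rho_act \<theta> ^^ k) \<phi> = \<phi>"
    using that[rule_format, of 1] by simp
  ultimately show ?thesis
    unfolding H0_Z4_def by blast
qed

lemma H0_Z4_iff: "\<phi> \<in> H0_Z4 \<theta> \<longleftrightarrow> (\<exists>g. \<phi> = parity_series \<theta> g \<and> g (0, 1) = g (1, 0))"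
proof
  assume "\<phi> \<in> H0_Z4 \<theta>"
  then have "\<phi> \<in> H0 \<theta>" and fixed: "rho_act \<theta> \<phi> = \<phi>"
    by (simp_all add: H0_Z4_iff_rho_fixed)
  define g where "g = (\<lambda>(x, y). \<phi> (x, y) / half_phase \<theta> x y)"
  have \<phi>_eq: "\<phi> = parity_series \<theta> g"
    unfolding g_def using \<open>\<phi> \<in> H0 \<theta>\<close> by (rule H0_eq_parity_series)
  from fixed have "parity_series \<theta> (\<lambda>(x, y). g (y, x)) = parity_series \<theta> g"
    by (simp only: \<phi>_eq rho_act_parity_series)
  then have "g (0, 1) = g (1, 0)"
    unfolding parity_series_eq_iff prod.case by (elim conjE) (rule sym)
  with \<phi>_eq show "\<exists>g. \<phi> = parity_series \<theta> g \<and> g (0, 1) = g (1, 0)"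
    by blast
next
  assume "\<exists>g. \<phi> = parity_series \<theta> g \<and> g (0, 1) = g (1, 0)"
  then obtain g where \<phi>_eq: "\<phi> = parity_series \<theta> g" and "g (0, 1) = g (1, 0)"
    by blast
  then have "rho_act \<theta> \<phi> = \<phi>"
    by (simp add: rho_act_parity_series parity_series_eq_iff)
  then show "\<phi> \<in> H0_Z4 \<theta>"
    unfolding H0_Z4_iff_rho_fixed \<phi>_eq using parity_series_in_H0 by blast
qed

definition parity_basis :: "nat \<Rightarrow> int \<times> int \<Rightarrow> complex" where
  "parity_basis i = (\<lambda>xy. if i = 0 then of_bool (xy = (0, 0))
                          else if i = 1 then of_bool (xy = (1, 1))
                          else of_bool (xy = (0, 1) \<or> xy = (1, 0)))"

lemma sum_parity_basis_series:
  "(\<lambda>k. \<Sum>i<3. c i * parity_series \<theta> (parity_basis i) k)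
     = parity_series \<theta> (\<lambda>xy. c 0 * parity_basis 0 xy + c 1 * parity_basis 1 xy + c 2 * parity_basis 2 xy)"
  by (rule ext, clarify) (simp add: eval_nat_numeral parity_series_def algebra_simps)

lemma H0_Z4_eq_span:
  "H0_Z4 \<theta> = {\<phi>. \<exists>c. \<phi> = (\<lambda>k. \<Sum>i<3. c i * parity_series \<theta> (parity_basis i) k)}"
proof (rule set_eqI, unfold mem_Collect_eq sum_parity_basis_series H0_Z4_iff, rule iffI)
  fix \<phi>
  assume "\<exists>g. \<phi> = parity_series \<theta> g \<and> g (0, 1) = g (1, 0)"
  then obtain g where \<phi>: "\<phi> = parity_series \<theta> g" and sym: "g (0, 1) = g (1, 0)"
    by blast
  define c where "c i = (if i = 0 then g (0, 0) else if i = 1 then g (1, 1) else g (0, 1))" for i :: nat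
  have "\<phi> = parity_series \<theta> (\<lambda>xy. c 0 * parity_basis 0 xy + c 1 * parity_basis 1 xy + c 2 * parity_basis 2 xy)"
    unfolding \<phi> parity_series_eq_iff using sym by (simp add: c_def parity_basis_def)
  then show "\<exists>c :: nat \<Rightarrow> complex. \<phi> = parity_series \<theta> (\<lambda>xy. c 0 * parity_basis 0 xy + c 1 * parity_basis 1 xy + c 2 * parity_basis 2 xy)"
    by blast
qed (auto simp: parity_basis_def)

lemma parity_basis_series_independent:
  assumes "(\<lambda>k. \<Sum>i<3. c i * parity_series \<theta> (parity_basis i) k) = (\<lambda>k. 0)" and "i < 3"
  shows "c i = 0"
proof -
  have "parity_series \<theta> (\<lambda>xy. c 0 * parity_basis 0 xy + c 1 * parity_basis 1 xy + c 2 * parity_basis 2 xy)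
      = parity_series \<theta> (\<lambda>xy. 0)"
    using assms(1) unfolding sum_parity_basis_series by (auto simp: parity_series_def)
  then have "c 0 = 0 \<and> c 1 = 0 \<and> c 2 = 0"
    unfolding parity_series_eq_iff by (simp add: parity_basis_def)
  with \<open>i < 3\<close> show ?thesis
    by (auto simp: less_Suc_eq numeral_3_eq_3 numeral_2_eq_2)
qed

theorem mainTheorem7:
  fixes \<theta> :: real
  assumes "\<theta> \<notin> \<rat>"
  shows "\<exists>e :: nat \<Rightarrow> coeffs.
           H0_Z4 \<theta> = {\<phi>. \<exists>c :: nat \<Rightarrow> complex. \<phi> = (\<lambda>k. \<Sum>i<3. c i * e i k)}
         \<and> (\<forall>c :: nat \<Rightarrow> complex. (\<lambda>k. \<Sum>i<3. c i * e i k) = (\<lambda>k. 0) \<longrightarrow> (\<forall>i<3. c i = 0))"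
  by (rule exI[of _ "\<lambda>i. parity_series \<theta> (parity_basis i)"])
    (use H0_Z4_eq_span parity_basis_series_independent in blast)

end
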